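(* Let $U=\begin{bmatrix} a & b\\ c & d\end{bmatrix}$ be a $2\times 2$ unitary matrix with either $abcd\neq0$ or $a=0$. Then $\mathcal{M}_s(U)\setminus(\mathcal{M}_{unif}\cup\mathcal{M}_{exp})\neq\emptyset$, i.e. the quantum walk defined by $U$ has a stationary measure that is neither uniform nor of the exponential form defining $\mathcal{M}_{exp}$.
   Context: Two-state quantum walk on $\mathbb{Z}$: states $\Psi=(\Psi(x))_{x\in\mathbb{Z}}\in(\mathbb{C}^2)^{\mathbb{Z}}$, $\Psi(x)={}^T[\Psi^L(x),\Psi^R(x)]$; evolution $(U^{(s)}\Psi)^L(x)=a\Psi^L(x+1)+b\Psi^R(x+1)$, $(U^{(s)}\Psi)^R(x)=c\Psi^L(x-1)+d\Psi^R(x-1)$. $\phi(\Psi)(x)=|\Psi^L(x)|^2+|\Psi^R(x)|^2$. $\mathcal{M}_s(U)=\{\mu\in[0,\infty)^{\mathbb{Z}}\setminus\{0\}:\exists\Psi_0$ with $\phi((U^{(s)})^n\Psi_0)=\mu$ for all $n\ge0\}$. $\mathcal{M}_{unif}=\{\mu_u^{(c)}:c>0\}$ with $\mu_u^{(c)}(x)=c$ for all $x$. $\mathcal{M}_{exp}$ is the set of measures $\mu$ on $\mathbb{Z}$ for which there exist constants $C_+,C_0,C_->0$ and $\gamma\in(0,1)$ with $\mu(x)=C_+\gamma^{-|x|}$ for $x\ge1$, $\mu(0)=C_0$, $\mu(x)=C_-\gamma^{-|x|}$ for $x\le -1$. *)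

theory Defs
  imports "HOL-Analysis.Analysis"
begin

definition unitary2 :: "complex \<Rightarrow> complex \<Rightarrow> complex \<Rightarrow> complex \<Rightarrow> bool" where
  "unitary2 a b c d \<longleftrightarrow>
     cnj a * a + cnj c * c = 1 \<and> cnj a * b + cnj c * d = 0 \<and>
     cnj b * a + cnj d * c = 0 \<and> cnj b * b + cnj d * d = 1"

text \<open>States: Psi x = (Psi^L x, Psi^R x).\<close>
type_synonym qstate = "int \<Rightarrow> complex \<times> complex"

definition Ustep :: "complex \<Rightarrow> complex \<Rightarrow> complex \<Rightarrow> complex \<Rightarrow> qstate \<Rightarrow> qstate" where
  "Ustep a b c d \<Psi> = (\<lambda>x.
     (a * fst (\<Psi> (x + 1)) + b * snd (\<Psi> (x + 1)),
      c * fst (\<Psi> (x - 1)) + d * snd (\<Psi> (x - 1))))"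

definition phi :: "qstate \<Rightarrow> int \<Rightarrow> real" where
  "phi \<Psi> x = (cmod (fst (\<Psi> x)))\<^sup>2 + (cmod (snd (\<Psi> x)))\<^sup>2"

definition Ms :: "complex \<Rightarrow> complex \<Rightarrow> complex \<Rightarrow> complex \<Rightarrow> (int \<Rightarrow> real) set" where
  "Ms a b c d = {\<mu>. (\<forall>x. \<mu> x \<ge> 0) \<and> \<mu> \<noteq> (\<lambda>_. 0) \<and>
     (\<exists>\<Psi>0. \<forall>n::nat. phi ((Ustep a b c d ^^ n) \<Psi>0) = \<mu>)}"

definition M_unif :: "(int \<Rightarrow> real) set" where
  "M_unif = {\<mu>. \<exists>C > 0. \<mu> = (\<lambda>_. C)}"

definition M_exp :: "(int \<Rightarrow> real) set" where
  "M_exp = {\<mu>. \<exists>Cp C0 Cm \<gamma>. Cp > 0 \<and> C0 > 0 \<and> Cm > 0 \<and> 0 < \<gamma> \<and> \<gamma> < 1 \<and>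
     (\<forall>x::int. (x \<ge> 1 \<longrightarrow> \<mu> x = Cp * \<gamma> powr (- real_of_int \<bar>x\<bar>)) \<and>
               (x = 0 \<longrightarrow> \<mu> x = C0) \<and>
               (x \<le> -1 \<longrightarrow> \<mu> x = Cm * \<gamma> powr (- real_of_int \<bar>x\<bar>)))}"

end

theory Submission
  imports Defs
begin

(* Both stationary measures are produced from eigenvectors: if U Psi = lambda Psi
   with |lambda| = 1, then phi (U^n Psi) = phi Psi for all n, so phi Psi is stationary.
   - If a = 0 (so d = 0 and |b| = |c| = 1), the walk has a two-site eigenvector and its
     measure is the indicator of {0, 1}.
   - If abcd <> 0, put s^2 = ad, t^2 = bc and k = s/a.  Then
       Psi(x) = k^x (b s (s + (x+1) t), a x t^2)
     is an eigenvector with eigenvalue s + t for any coin; unitarity gives |k| = |s + t| = 1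
     and Re (s conj t) = 0, and the measure is the quadratic polynomial
       |a|^2 |b|^2 (1 + 2|b|^2 x + 2|b|^2 x^2).
   On the other side, every uniform or exponential measure is strictly positive and
   log-linear on each half-line (mu(x+1)^2 = mu x * mu(x+2)).  A finitely supported
   measure violates positivity and a non-constant quadratic violates log-linearity,
   which proves the theorem. *)

lemma unitary2_norms:
  assumes "unitary2 a b c d"
  shows "(cmod a)\<^sup>2 + (cmod b)\<^sup>2 = 1" "cmod d = cmod a" "cmod c = cmod b"
    and "cnj c * d = - (cnj a * b)"
proof -
  have col1: "cnj a * a + cnj c * c = 1" and orth: "cnj a * b + cnj c * d = 0"
    and col2: "cnj b * b + cnj d * d = 1" using assms by (auto simp: unitary2_def)
  show cd: "cnj c * d = - (cnj a * b)" using orth by (simp add: eq_neg_iff_add_eq_0 add.commute)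
  have ac: "(cmod a)\<^sup>2 + (cmod c)\<^sup>2 = 1"
    using arg_cong[OF col1, of Re] unfolding cmod_power2 by (simp add: power2_eq_square)
  have bd: "(cmod b)\<^sup>2 + (cmod d)\<^sup>2 = 1"
    using arg_cong[OF col2, of Re] unfolding cmod_power2 by (simp add: power2_eq_square)
  have "cmod c * cmod d = cmod a * cmod b" using arg_cong[OF cd, of cmod] by (simp add: norm_mult)
  then have "(1 - (cmod a)\<^sup>2) * (1 - (cmod b)\<^sup>2) = (cmod a)\<^sup>2 * (cmod b)\<^sup>2"
    using ac bd by (metis add_diff_cancel_left' power_mult_distrib)
  then show ab: "(cmod a)\<^sup>2 + (cmod b)\<^sup>2 = 1" by (simp add: algebra_simps)
  have "(cmod d)\<^sup>2 = (cmod a)\<^sup>2" using ab bd by linarith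
  then show "cmod d = cmod a" by (simp add: power2_eq_iff_nonneg)
  have "(cmod c)\<^sup>2 = (cmod b)\<^sup>2" using ab ac by linarith
  then show "cmod c = cmod b" by (simp add: power2_eq_iff_nonneg)
qed

lemma norm_add_orthogonal:
  fixes s t :: complex and y :: real
  assumes "Re (s * cnj t) = 0"
  shows "(cmod (s + of_real y * t))\<^sup>2 = (cmod s)\<^sup>2 + y\<^sup>2 * (cmod t)\<^sup>2"
proof -
  have "(cmod (s + of_real y * t))\<^sup>2 = (cmod s)\<^sup>2 + y\<^sup>2 * (cmod t)\<^sup>2 + 2 * y * Re (s * cnj t)"
    unfolding cmod_power2 by (simp add: power2_eq_square algebra_simps)
  with assms show ?thesis by simp
qed

lemma Re_zero_if_square_nonpos:
  fixes w :: complex and r :: real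
  assumes "w\<^sup>2 = - of_real r" "r \<ge> 0"
  shows "Re w = 0"
proof (rule ccontr)
  assume re: "Re w \<noteq> 0"
  have "Re w * Im w = 0" using arg_cong[OF assms(1), of Im] by (auto simp: power2_eq_square)
  with re have "Im w = 0" by auto
  then have "(Re w)\<^sup>2 = - r" using arg_cong[OF assms(1), of Re] by (simp add: power2_eq_square)
  with re assms(2) show False by (smt (verit) zero_less_power2)
qed

definition scale_state :: "complex \<Rightarrow> qstate \<Rightarrow> qstate" where
  "scale_state l \<Psi> = (\<lambda>x. (l * fst (\<Psi> x), l * snd (\<Psi> x)))"

lemma Ustep_scale_state: "Ustep a b c d (scale_state l \<Psi>) = scale_state l (Ustep a b c d \<Psi>)"
  by (auto simp: Ustep_def scale_state_def fun_eq_iff algebra_simps)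

lemma iterate_eigenstate:
  assumes "Ustep a b c d \<Psi> = scale_state l \<Psi>"
  shows "(Ustep a b c d ^^ n) \<Psi> = scale_state (l ^ n) \<Psi>"
proof (induction n)
  case 0
  then show ?case by (simp add: scale_state_def)
next
  case (Suc n)
  have "(Ustep a b c d ^^ Suc n) \<Psi> = scale_state (l ^ n) (scale_state l \<Psi>)"
    using Suc by (simp add: Ustep_scale_state assms)
  also have "\<dots> = scale_state (l ^ Suc n) \<Psi>" by (simp add: scale_state_def algebra_simps)
  finally show ?case .
qed

lemma phi_scale_state: "cmod l = 1 \<Longrightarrow> phi (scale_state l \<Psi>) = phi \<Psi>"
  by (simp add: phi_def scale_state_def norm_mult fun_eq_iff)

lemma eigenstate_stationary:
  assumes "Ustep a b c d \<Psi> = scale_state l \<Psi>" "cmod l = 1" "phi \<Psi> \<noteq> (\<lambda>_. 0)"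
  shows "phi \<Psi> \<in> Ms a b c d"
proof -
  have "phi ((Ustep a b c d ^^ n) \<Psi>) = phi \<Psi>" for n
    using assms by (simp add: iterate_eigenstate phi_scale_state norm_power)
  moreover have "phi \<Psi> x \<ge> 0" for x by (simp add: phi_def)
  ultimately show ?thesis using assms(3) unfolding Ms_def by blast
qed

definition geometric_tails :: "(int \<Rightarrow> real) \<Rightarrow> bool" where
  "geometric_tails \<mu> \<longleftrightarrow>
     (\<forall>x\<ge>1. (\<mu> (x + 1))\<^sup>2 = \<mu> x * \<mu> (x + 2)) \<and> (\<forall>x\<le>-1. (\<mu> (x - 1))\<^sup>2 = \<mu> x * \<mu> (x - 2))"

text \<open>Uniform and exponential measures are strictly positive with geometric tails;
  these are the only properties of them the theorem needs.\<close>
lemma M_unif_props: "\<mu> \<in> M_unif \<Longrightarrow> (\<forall>x. \<mu> x > 0) \<and> geometric_tails \<mu>"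
  by (auto simp: M_unif_def geometric_tails_def power2_eq_square)

lemma M_exp_props:
  assumes "\<mu> \<in> M_exp"
  shows "(\<forall>x. \<mu> x > 0) \<and> geometric_tails \<mu>"
proof -
  obtain Cp C0 Cm \<gamma> where pos: "Cp > 0" "C0 > 0" "Cm > 0" "\<gamma> > 0" and
    \<mu>: "\<And>x::int. (x \<ge> 1 \<longrightarrow> \<mu> x = Cp * \<gamma> powr (- real_of_int \<bar>x\<bar>)) \<and>
            (x = 0 \<longrightarrow> \<mu> x = C0) \<and> (x \<le> -1 \<longrightarrow> \<mu> x = Cm * \<gamma> powr (- real_of_int \<bar>x\<bar>))"
    using assms unfolding M_exp_def by blast
  have "\<mu> x > 0" for x
    using \<mu>[of x] pos by (cases "x \<ge> 1"; cases "x = 0") auto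
  moreover have geom: "(\<gamma> powr (- real_of_int (n + 1)))\<^sup>2
      = \<gamma> powr (- real_of_int n) * \<gamma> powr (- real_of_int (n + 2))" for n :: int
    by (simp add: power2_eq_square flip: powr_add)
  have "(\<mu> (x + 1))\<^sup>2 = \<mu> x * \<mu> (x + 2)" if "x \<ge> 1" for x
    using \<mu>[of x] \<mu>[of "x + 1"] \<mu>[of "x + 2"] geom[of x] that
    by (simp add: power_mult_distrib power2_eq_square)
  moreover have "(\<mu> (x - 1))\<^sup>2 = \<mu> x * \<mu> (x - 2)" if "x \<le> -1" for x
    using \<mu>[of x] \<mu>[of "x - 1"] \<mu>[of "x - 2"] geom[of "- x"] that
    by (simp add: power_mult_distrib power2_eq_square)
  ultimately show ?thesis unfolding geometric_tails_def by blast
qed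

lemma vanishing_not_classical: "\<mu> x = 0 \<Longrightarrow> \<mu> \<notin> M_unif \<union> M_exp"
  using M_unif_props M_exp_props by (metis UnE less_irrefl)

lemma quadratic_not_classical:
  fixes K B :: real
  assumes "K > 0" "B > 0"
  shows "(\<lambda>x. K * (1 + 2 * B * of_int x + 2 * B * (of_int x)\<^sup>2)) \<notin> M_unif \<union> M_exp"
    (is "?\<mu> \<notin> _")
proof
  assume "?\<mu> \<in> M_unif \<union> M_exp"
  then have "geometric_tails ?\<mu>" using M_unif_props M_exp_props by blast
  then have right: "(?\<mu> 2)\<^sup>2 = ?\<mu> 1 * ?\<mu> 3" and left: "(?\<mu> (-2))\<^sup>2 = ?\<mu> (-1) * ?\<mu> (-3)"
    unfolding geometric_tails_def by (auto dest: spec[of _ 1] spec[of _ "-1"])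
  from right have "K\<^sup>2 * (4 * B * (12 * B - 1)) = 0" by (simp add: algebra_simps power2_eq_square)
  moreover from left have "K\<^sup>2 * (4 * B * (4 * B - 1)) = 0" by (simp add: algebra_simps power2_eq_square)
  ultimately show False using assms by simp
qed

lemma localized_stationary_measure:
  assumes u: "unitary2 a b c d" and a0: "a = 0"
  shows "(\<lambda>x. if x = 0 \<or> x = 1 then 1 else 0) \<in> Ms a b c d"
proof -
  note norms = unitary2_norms[OF u]
  have b1: "cmod b = 1" using norms(1) a0 norm_ge_zero[of b] by (auto simp: power2_eq_1_iff)
  have c1: "cmod c = 1" and d0: "d = 0" using norms a0 b1 by auto
  define l where "l = csqrt (b * c)"
  have ll: "l * l = b * c" unfolding l_def by (metis power2_csqrt power2_eq_square)
  have "(cmod l)\<^sup>2 = 1" using arg_cong[OF ll, of cmod] b1 c1 by (simp add: norm_mult power2_eq_square)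
  then have l1: "cmod l = 1" using norm_ge_zero[of l] by (auto simp: power2_eq_1_iff)
  define \<Psi> :: qstate where "\<Psi> = (\<lambda>x. if x = 0 then (l, 0) else if x = 1 then (0, c) else (0, 0))"
  have "Ustep a b c d \<Psi> = scale_state l \<Psi>"
    unfolding fun_eq_iff Ustep_def scale_state_def \<Psi>_def using a0 d0 ll by (auto simp: algebra_simps)
  moreover have phi: "phi \<Psi> = (\<lambda>x. if x = 0 \<or> x = 1 then 1 else 0)"
    unfolding fun_eq_iff phi_def \<Psi>_def using l1 c1 by auto
  moreover have "phi \<Psi> \<noteq> (\<lambda>_. 0)" unfolding phi by (metis one_neq_zero)
  ultimately show ?thesis using eigenstate_stationary l1 by metis
qed

text \<open>The eigenvector of the generic case, parametrised by square roots \<open>s\<close> of \<open>ad\<close>,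
  \<open>t\<close> of \<open>bc\<close> and the ratio \<open>k = s / a\<close>.\<close>
definition quadratic_state :: "complex \<Rightarrow> complex \<Rightarrow> complex \<Rightarrow> complex \<Rightarrow> complex \<Rightarrow> qstate" where
  "quadratic_state a b s t k =
     (\<lambda>x. (k powi x * (b * s * (s + (of_int x + 1) * t)), k powi x * (a * of_int x * t\<^sup>2)))"

lemma quadratic_state_eigen:
  fixes a b c d s t k :: complex
  assumes ak: "a * k = s" and k0: "k \<noteq> 0" and ss: "s\<^sup>2 = a * d" and tt: "t\<^sup>2 = b * c"
  shows "Ustep a b c d (quadratic_state a b s t k) = scale_state (s + t) (quadratic_state a b s t k)"
proof
  fix x :: int
  define P Q X where "P = k powi x" and "Q = k powi (x - 1)" and "X = (of_int x :: complex)"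
  have next_power: "k powi (x + 1) = P * k" using k0 by (simp add: P_def power_int_add_1)
  have prev_power: "Q * k = P" using k0 unfolding P_def Q_def by (metis diff_add_cancel power_int_add_1)
  have left: "a * (P * k * (b * s * (s + (X + 1 + 1) * t))) + b * (P * k * (a * (X + 1) * t\<^sup>2))
      = (s + t) * (P * (b * s * (s + (X + 1) * t)))"
  proof -
    have "a * (P * k * (b * s * (s + (X + 1 + 1) * t))) + b * (P * k * (a * (X + 1) * t\<^sup>2))
        = (a * k) * (P * b * (s * (s + (X + 2) * t) + (X + 1) * t\<^sup>2))" by (simp add: algebra_simps)
    also have "\<dots> = s * (P * b * (s * (s + (X + 2) * t) + (X + 1) * t\<^sup>2))" by (simp only: ak)
    also have "\<dots> = (s + t) * (P * (b * s * (s + (X + 1) * t)))" by (simp add: algebra_simps power2_eq_square)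
    finally show ?thesis .
  qed
  have right: "c * (Q * (b * s * (s + (X - 1 + 1) * t))) + d * (Q * (a * (X - 1) * t\<^sup>2))
      = (s + t) * (P * (a * X * t\<^sup>2))"
  proof -
    have "c * (Q * (b * s * (s + (X - 1 + 1) * t))) + d * (Q * (a * (X - 1) * t\<^sup>2))
        = Q * ((b * c) * s * (s + X * t) + (a * d) * (X - 1) * t\<^sup>2)" by (simp add: algebra_simps)
    also have "\<dots> = Q * (t\<^sup>2 * s * (s + X * t) + s\<^sup>2 * (X - 1) * t\<^sup>2)" by (simp only: ss tt)
    also have "\<dots> = (s + t) * (Q * s * X * t\<^sup>2)" by (simp add: algebra_simps power2_eq_square)
    also have "\<dots> = (s + t) * ((Q * k) * (a * X * t\<^sup>2))" by (simp add: ak[symmetric] algebra_simps)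
    finally show ?thesis by (simp only: prev_power)
  qed
  show "Ustep a b c d (quadratic_state a b s t k) x = scale_state (s + t) (quadratic_state a b s t k) x"
    using left right
    by (simp add: Ustep_def scale_state_def quadratic_state_def next_power P_def Q_def X_def)
qed

lemma quadratic_state_phi:
  assumes k1: "cmod k = 1" and orth: "Re (s * cnj t) = 0"
  shows "phi (quadratic_state a b s t k) x =
           (cmod b * cmod s)\<^sup>2 * ((cmod s)\<^sup>2 + (of_int x + 1)\<^sup>2 * (cmod t)\<^sup>2)
           + (cmod a)\<^sup>2 * (of_int x)\<^sup>2 * (cmod t)\<^sup>2 * (cmod t)\<^sup>2"
proof -
  have "s + (of_int x + 1) * t = s + of_real (of_int x + 1) * t" by simp
  then have "(cmod (s + (of_int x + 1) * t))\<^sup>2 = (cmod s)\<^sup>2 + (of_int x + 1)\<^sup>2 * (cmod t)\<^sup>2"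
    using norm_add_orthogonal[OF orth] by presburger
  moreover have "cmod (k powi x) = 1" using k1 by (simp add: norm_power_int)
  ultimately show ?thesis
    by (simp add: phi_def quadratic_state_def norm_mult norm_power power_mult_distrib)
qed

lemma quadratic_stationary_measure:
  assumes u: "unitary2 a b c d" and nz: "a * b * c * d \<noteq> 0"
  shows "\<exists>K B :: real. K > 0 \<and> B > 0 \<and>
           (\<lambda>x. K * (1 + 2 * B * of_int x + 2 * B * (of_int x)\<^sup>2)) \<in> Ms a b c d"
proof -
  note norms = unitary2_norms[OF u]
  have a0: "a \<noteq> 0" and b0: "b \<noteq> 0" and d0: "d \<noteq> 0" using nz by auto
  define A B where "A = (cmod a)\<^sup>2" and "B = (cmod b)\<^sup>2"
  have AB: "A + B = 1" and A0: "A > 0" and B0: "B > 0"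
    using norms(1) a0 b0 by (simp_all add: A_def B_def)
  define s t k where "s = csqrt (a * d)" and "t = csqrt (b * c)" and "k = s / a"
  have ss: "s\<^sup>2 = a * d" and tt: "t\<^sup>2 = b * c" by (simp_all add: s_def t_def)
  have s0: "s \<noteq> 0" using ss a0 d0 by auto
  have ak: "a * k = s" and k0: "k \<noteq> 0" using a0 s0 by (simp_all add: k_def)
  have "(cmod s)\<^sup>2 = (cmod a)\<^sup>2" using arg_cong[OF ss, of cmod] norms(2)
    by (simp add: norm_mult norm_power power2_eq_square)
  then have norm_s: "cmod s = cmod a" by (simp add: power2_eq_iff_nonneg)
  have "(cmod t)\<^sup>2 = (cmod b)\<^sup>2" using arg_cong[OF tt, of cmod] norms(3)
    by (simp add: norm_mult norm_power power2_eq_square)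
  then have norm_t: "cmod t = cmod b" by (simp add: power2_eq_iff_nonneg)
  have k1: "cmod k = 1" using norm_s a0 by (simp add: k_def norm_divide)
  text \<open>The orthogonality \<open>Re (s conj t) = 0\<close> comes from the off-diagonal unitarity relation.\<close>
  have "(s * cnj t)\<^sup>2 = s\<^sup>2 * cnj (t\<^sup>2)" by (simp add: power_mult_distrib)
  also have "\<dots> = (a * cnj b) * (cnj c * d)" by (simp add: ss tt mult_ac)
  also have "\<dots> = - ((a * cnj a) * (b * cnj b))" unfolding norms(4) by (simp add: mult_ac)
  also have "\<dots> = - of_real (A * B)" by (simp only: A_def B_def of_real_mult complex_norm_square)
  finally have orth: "Re (s * cnj t) = 0"
    by (rule Re_zero_if_square_nonpos) (use A0 B0 in simp)
  have "(cmod (s + t))\<^sup>2 = 1"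
    using norm_add_orthogonal[OF orth, of 1] norm_s norm_t AB by (simp add: A_def B_def)
  then have l1: "cmod (s + t) = 1" using norm_ge_zero[of "s + t"] by (auto simp: power2_eq_1_iff)
  define \<mu> where "\<mu> = (\<lambda>x. A * B * (1 + 2 * B * of_int x + 2 * B * (of_int x)\<^sup>2))"
  have phi: "phi (quadratic_state a b s t k) = \<mu>"
  proof
    fix x
    have "phi (quadratic_state a b s t k) x = B * A * (A + (of_int x + 1)\<^sup>2 * B) + A * (of_int x)\<^sup>2 * B * B"
      unfolding quadratic_state_phi[OF k1 orth] norm_s norm_t A_def B_def by (simp add: power_mult_distrib)
    also have "\<dots> = \<mu> x"
    proof -
      have A_eq: "A = 1 - B" using AB by simp
      show ?thesis unfolding \<mu>_def A_eq by (simp add: algebra_simps power2_eq_square)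
    qed
    finally show "phi (quadratic_state a b s t k) x = \<mu> x" .
  qed
  have "\<mu> 0 \<noteq> 0" using A0 B0 by (simp add: \<mu>_def)
  then have "phi (quadratic_state a b s t k) \<noteq> (\<lambda>_. 0)" unfolding phi by force
  then have "\<mu> \<in> Ms a b c d"
    using eigenstate_stationary[OF quadratic_state_eigen[OF ak k0 ss tt] l1] phi by simp
  then show ?thesis using A0 B0 unfolding \<mu>_def by (metis mult_pos_pos)
qed

theorem theorem2:
  fixes a b c d :: complex
  assumes "unitary2 a b c d"
    and "a * b * c * d \<noteq> 0 \<or> a = 0"
  shows "Ms a b c d - (M_unif \<union> M_exp) \<noteq> {}"
  using assms(2)
proof
  assume "a * b * c * d \<noteq> 0"
  then obtain K B :: real where "K > 0" "B > 0"
    and "(\<lambda>x. K * (1 + 2 * B * of_int x + 2 * B * (of_int x)\<^sup>2)) \<in> Ms a b c d"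
    using quadratic_stationary_measure[OF assms(1)] by blast
  with quadratic_not_classical show ?thesis by blast
next
  assume "a = 0"
  then have "(\<lambda>x::int. if x = 0 \<or> x = 1 then 1 else 0 :: real) \<in> Ms a b c d"
    using localized_stationary_measure[OF assms(1)] by blast
  moreover have "(\<lambda>x::int. if x = 0 \<or> x = 1 then 1 else 0 :: real) \<notin> M_unif \<union> M_exp"
    by (rule vanishing_not_classical[of _ 2]) simp
  ultimately show ?thesis by blast
qed

end
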